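(* Let $K$ be an algebraically closed field of characteristic $p>0$, $p\neq 2$, and $n\geq 4$. Let $\Phi$ be a group automorphism of $\mathrm{Aut}_0 K[x_1,\ldots,x_n]$ which fixes every element of $\mathrm{GL}_n(K)$ and fixes the automorphism $\psi: x_1\mapsto x_1+x_2x_3$, $x_k\mapsto x_k$ ($k\neq 1$). Let $M\in K[x_3,\ldots,x_n]$ be a monomial (a scalar multiple of a product of powers of $x_3,\ldots,x_n$) of positive total degree, and let $\varphi$ be the automorphism $x_1\mapsto x_1+M(x_3,\ldots,x_n)$, $x_k\mapsto x_k$ for $k=2,\ldots,n$. Then $\Phi(\varphi)=\varphi$.
   Context: $\mathrm{Aut}_0 K[x_1,\ldots,x_n]$ is the group under composition of $K$-algebra automorphisms of $K[x_1,\ldots,x_n]$ preserving the origin (each $\varphi(x_i)$ has zero constant term); $\mathrm{GL}_n(K)$ is its subgroup of linear automorphisms $x_i\mapsto\sum_j a_{ij}x_j$ with invertible matrix $(a_{ij})$. *)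

theory Defs
  imports "HOL-Library.Poly_Mapping" "HOL-Computational_Algebra.Polynomial"
begin

text \<open>Multivariate polynomials over 'a in variables indexed by nat.
  The paper's variable x_k (k = 1..n) is variable index k-1 here.\<close>
type_synonym 'a mpoly = "(nat \<Rightarrow>\<^sub>0 nat) \<Rightarrow>\<^sub>0 'a"

definition Var :: "nat \<Rightarrow> 'a::comm_ring_1 mpoly" where
  "Var i = Poly_Mapping.single (Poly_Mapping.single i 1) 1"

definition Const :: "'a::comm_ring_1 \<Rightarrow> 'a mpoly" where
  "Const c = Poly_Mapping.single 0 c"

definition polys :: "nat \<Rightarrow> 'a::comm_ring_1 mpoly set" where
  "polys n = {p. \<forall>m \<in> Poly_Mapping.keys p. Poly_Mapping.keys m \<subseteq> {..<n}}"

definition subst :: "(nat \<Rightarrow> 'a::comm_ring_1 mpoly) \<Rightarrow> 'a mpoly \<Rightarrow> 'a mpoly" where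
  "subst s p = (\<Sum>m \<in> Poly_Mapping.keys p.
      Const (Poly_Mapping.lookup p m) *
      (\<Prod>i \<in> Poly_Mapping.keys m. s i ^ Poly_Mapping.lookup m i))"

text \<open>An endomorphism of K[x_1..x_n] is represented by the tuple of images of
  the variables; variables outside the range are normalised to themselves.\<close>
definition endos :: "nat \<Rightarrow> (nat \<Rightarrow> 'a::comm_ring_1 mpoly) set" where
  "endos n = {s. (\<forall>i<n. s i \<in> polys n) \<and> (\<forall>i\<ge>n. s i = Var i)}"

text \<open>Composition of endomorphisms (as maps): (comp s t) = s \<circ> t,
  i.e. x_i \<mapsto> s(t(x_i)).\<close>
definition comp :: "(nat \<Rightarrow> 'a::comm_ring_1 mpoly) \<Rightarrow> (nat \<Rightarrow> 'a mpoly) \<Rightarrow> (nat \<Rightarrow> 'a mpoly)" where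
  "comp s t = (\<lambda>i. subst s (t i))"

definition idm :: "nat \<Rightarrow> 'a::comm_ring_1 mpoly" where
  "idm = Var"

definition autos :: "nat \<Rightarrow> (nat \<Rightarrow> 'a::comm_ring_1 mpoly) set" where
  "autos n = {s \<in> endos n. \<exists>t \<in> endos n. comp s t = idm \<and> comp t s = idm}"

definition Aut0 :: "nat \<Rightarrow> (nat \<Rightarrow> 'a::comm_ring_1 mpoly) set" where
  "Aut0 n = {s \<in> autos n. \<forall>i<n. Poly_Mapping.lookup (s i) 0 = 0}"

definition GLn :: "nat \<Rightarrow> (nat \<Rightarrow> 'a::comm_ring_1 mpoly) set" where
  "GLn n = {s \<in> Aut0 n. \<forall>i<n. \<exists>a::nat \<Rightarrow> 'a. s i = (\<Sum>j<n. Const (a j) * Var j)}"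

definition group_automorphism_Aut0 ::
  "nat \<Rightarrow> ((nat \<Rightarrow> 'a::comm_ring_1 mpoly) \<Rightarrow> (nat \<Rightarrow> 'a mpoly)) \<Rightarrow> bool" where
  "group_automorphism_Aut0 n \<Phi> \<longleftrightarrow> bij_betw \<Phi> (Aut0 n) (Aut0 n) \<and>
     (\<forall>s \<in> Aut0 n. \<forall>t \<in> Aut0 n. \<Phi> (comp s t) = comp (\<Phi> s) (\<Phi> t))"

definition alg_closed :: "'a::field itself \<Rightarrow> bool" where
  "alg_closed _ \<longleftrightarrow> (\<forall>q :: 'a poly. Polynomial.degree q > 0 \<longrightarrow> (\<exists>x. poly q x = 0))"

end

theory Submission imports Defs begin

text \<open>Write E_i(f) for the elementary automorphism x_i \<mapsto> x_i + f, where f is free of x_i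
  (variables indexed from 0). For pairwise distinct i, j, k and g free of x_i and x_k,
  the commutator of E_k(g) and E_i(x_k x_j) is E_i(g x_j); hence \<Phi> fixes E_i(g x_j) as soon as
  it fixes E_k(g) and E_i(x_k x_j). From \<psi> = E_0(x_1 x_2), its conjugate E_1(x_0 x_2) by the
  transposition of x_0 and x_1, and the linear maps E_2(x_j), one gets that \<Phi> fixes
  E_i(x_k x_j) for {i, k} = {0, 1} and j \<ge> 2. Then, peeling off one variable of the monomial
  at a time and alternating between the directions 0 and 1, \<Phi> fixes E_0(M) and E_1(M) for
  every monomial M in x_2, ..., x_(n-1); monomials of degree one give linear maps.\<close>

lemma poly_mapping_sum_single:
  "(\<Sum>m\<in>Poly_Mapping.keys p. Poly_Mapping.single m (Poly_Mapping.lookup p m)) = p"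
  by (rule poly_mapping_eqI) (simp add: lookup_sum lookup_single when_def in_keys_iff)

lemma single_eq_0_iff [simp]: "Poly_Mapping.single k v = 0 \<longleftrightarrow> v = 0"
  by (metis lookup_single_eq lookup_zero single_zero)

lemma keys_add_nat:
  "Poly_Mapping.keys (a + b) = Poly_Mapping.keys a \<union> Poly_Mapping.keys (b :: 'b \<Rightarrow>\<^sub>0 nat)"
  by (auto simp: in_keys_iff lookup_add)

lemma poly_mapping_add_single_induct [case_names zero add_single]:
  fixes e :: "'b \<Rightarrow>\<^sub>0 nat"
  assumes zero: "P 0" and add_single: "\<And>e j. P e \<Longrightarrow> P (e + Poly_Mapping.single j 1)"
  shows "P e"
proof (induction e rule: update_induct)
  case const
  show ?case using zero .
next
  case (update f a b)
  have "P (f + Poly_Mapping.single a m)" for m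
  proof (induction m)
    case (Suc m)
    have "f + Poly_Mapping.single a (Suc m) = (f + Poly_Mapping.single a m) + Poly_Mapping.single a 1"
      by (simp add: single_add[symmetric] add.assoc)
    then show ?case using add_single[OF Suc.IH] by simp
  qed (simp add: update.IH)
  moreover have "Poly_Mapping.update a b f = f + Poly_Mapping.single a b"
    using update.hyps(1)
    by (intro poly_mapping_eqI) (auto simp: lookup_update lookup_add lookup_single in_keys_iff when_def)
  ultimately show ?case by simp
qed

subsection \<open>Substitution\<close>

definition subst_monomial :: "(nat \<Rightarrow> 'a::comm_ring_1 mpoly) \<Rightarrow> (nat \<Rightarrow>\<^sub>0 nat) \<Rightarrow> 'a mpoly" where
  "subst_monomial s m = (\<Prod>i \<in> Poly_Mapping.keys m. s i ^ Poly_Mapping.lookup m i)"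

lemma subst_monomial_superset:
  "finite S \<Longrightarrow> Poly_Mapping.keys m \<subseteq> S \<Longrightarrow>
    subst_monomial s m = (\<Prod>i\<in>S. s i ^ Poly_Mapping.lookup m i)"
  unfolding subst_monomial_def by (rule prod.mono_neutral_left) (auto simp: in_keys_iff)

lemma subst_monomial_0 [simp]: "subst_monomial s 0 = 1"
  by (simp add: subst_monomial_def)

lemma subst_monomial_add: "subst_monomial s (a + b) = subst_monomial s a * subst_monomial s b"
proof -
  let ?S = "Poly_Mapping.keys a \<union> Poly_Mapping.keys b"
  have "subst_monomial s (a + b) = (\<Prod>i\<in>?S. s i ^ Poly_Mapping.lookup (a + b) i)"
    by (rule subst_monomial_superset) (auto simp: keys_add_nat)
  also have "\<dots> = (\<Prod>i\<in>?S. s i ^ Poly_Mapping.lookup a i) * (\<Prod>i\<in>?S. s i ^ Poly_Mapping.lookup b i)"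
    by (simp add: lookup_add power_add prod.distrib)
  also have "\<dots> = subst_monomial s a * subst_monomial s b"
    by (simp add: subst_monomial_superset[symmetric])
  finally show ?thesis .
qed

lemma Const_0 [simp]: "Const 0 = 0"
  by (simp add: Const_def)

lemma Const_add: "Const (a + b) = Const a + Const b"
  by (simp add: Const_def single_add)

lemma Const_mult: "Const (a * b) = Const a * Const b"
  by (simp add: Const_def mult_single)

lemma subst_eq_sum_monomials:
  "subst s p = (\<Sum>m \<in> Poly_Mapping.keys p. Const (Poly_Mapping.lookup p m) * subst_monomial s m)"
  by (simp add: subst_def subst_monomial_def)

lemma subst_superset:
  "finite S \<Longrightarrow> Poly_Mapping.keys p \<subseteq> S \<Longrightarrow>
    subst s p = (\<Sum>m\<in>S. Const (Poly_Mapping.lookup p m) * subst_monomial s m)"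
  unfolding subst_eq_sum_monomials by (rule sum.mono_neutral_left) (auto simp: in_keys_iff)

lemma subst_0 [simp]: "subst s 0 = 0"
  by (simp add: subst_def)

lemma subst_add: "subst s (p + q) = subst s p + subst s q"
proof -
  let ?S = "Poly_Mapping.keys p \<union> Poly_Mapping.keys q"
  have S: "finite ?S" by simp
  have "subst s (p + q) = (\<Sum>m\<in>?S. Const (Poly_Mapping.lookup (p + q) m) * subst_monomial s m)"
    by (rule subst_superset[OF S]) (rule keys_add)
  also have "\<dots> = (\<Sum>m\<in>?S. Const (Poly_Mapping.lookup p m) * subst_monomial s m)
      + (\<Sum>m\<in>?S. Const (Poly_Mapping.lookup q m) * subst_monomial s m)"
    by (simp add: lookup_add Const_add distrib_right sum.distrib)
  also have "\<dots> = subst s p + subst s q"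
    by (simp add: subst_superset[OF S])
  finally show ?thesis .
qed

lemma subst_sum: "subst s (sum f A) = (\<Sum>x\<in>A. subst s (f x))"
  by (induction A rule: infinite_finite_induct) (simp_all add: subst_add)

lemma subst_single: "subst s (Poly_Mapping.single m c) = Const c * subst_monomial s m"
  by (simp add: subst_eq_sum_monomials)

lemma subst_Const [simp]: "subst s (Const c) = Const c"
  by (simp add: Const_def subst_single)

lemma subst_1 [simp]: "subst s 1 = 1"
  using subst_Const[of s 1] by (simp add: Const_def)

lemma subst_mult: "subst s (p * q) = subst s p * subst s q"
proof -
  have "p * q = (\<Sum>a\<in>Poly_Mapping.keys p. \<Sum>b\<in>Poly_Mapping.keys q.
      Poly_Mapping.single a (Poly_Mapping.lookup p a) * Poly_Mapping.single b (Poly_Mapping.lookup q b))"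
    by (subst (1) poly_mapping_sum_single[of p, symmetric], subst (1) poly_mapping_sum_single[of q, symmetric])
       (simp add: sum_distrib_left sum_distrib_right, rule sum.swap)
  then have "subst s (p * q) = (\<Sum>a\<in>Poly_Mapping.keys p. \<Sum>b\<in>Poly_Mapping.keys q.
      (Const (Poly_Mapping.lookup p a) * subst_monomial s a) * (Const (Poly_Mapping.lookup q b) * subst_monomial s b))"
    by (simp add: subst_sum mult_single subst_single Const_mult subst_monomial_add mult_ac)
  also have "\<dots> = subst s p * subst s q"
    by (simp add: subst_eq_sum_monomials sum_distrib_left sum_distrib_right, rule sum.swap)
  finally show ?thesis .
qed

lemma subst_power: "subst s (p ^ k) = subst s p ^ k"
  by (induction k) (simp_all add: subst_mult)

lemma subst_prod: "subst s (prod f A) = (\<Prod>x\<in>A. subst s (f x))"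
  by (induction A rule: infinite_finite_induct) (simp_all add: subst_mult)

lemma subst_Var [simp]: "subst s (Var i) = s i"
  by (simp add: Var_def subst_single subst_monomial_def Const_def)

lemma subst_subst: "subst s (subst t p) = subst (comp s t) p"
proof -
  have "subst s (subst_monomial t m) = subst_monomial (comp s t) m" for m
    by (simp add: subst_monomial_def subst_prod subst_power comp_def)
  then show ?thesis
    unfolding subst_eq_sum_monomials[of t p] subst_eq_sum_monomials[of "comp s t" p]
    by (simp add: subst_sum subst_mult)
qed

lemma comp_assoc: "comp (comp s t) u = comp s (comp t u)"
  by (simp add: comp_def subst_subst)

lemma comp_idm [simp]: "comp s idm = s"
  by (simp add: comp_def idm_def)

lemma comp_right_cancel: "comp x g = comp y g \<Longrightarrow> comp g h = idm \<Longrightarrow> x = y"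
  by (metis comp_assoc comp_idm)

lemma subst_monomial_Var: "subst_monomial Var m = (Poly_Mapping.single m 1 :: 'a::comm_ring_1 mpoly)"
proof -
  have Var_power: "Var i ^ k = Poly_Mapping.single (Poly_Mapping.single i k) (1::'a)" for i k
    by (induction k) (simp_all add: Var_def mult_single single_add[symmetric] add.commute)
  have "(\<Prod>i\<in>S. Poly_Mapping.single (Poly_Mapping.single i (Poly_Mapping.lookup m i)) (1::'a))
      = Poly_Mapping.single (\<Sum>i\<in>S. Poly_Mapping.single i (Poly_Mapping.lookup m i)) 1" for S
    by (induction S rule: infinite_finite_induct) (simp_all add: mult_single)
  then show ?thesis
    by (simp add: subst_monomial_def Var_power poly_mapping_sum_single)
qed

lemma subst_fixing_Vars:
  assumes "\<And>m i. m \<in> Poly_Mapping.keys p \<Longrightarrow> i \<in> Poly_Mapping.keys m \<Longrightarrow> s i = Var i"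
  shows "subst s p = p"
proof -
  have "subst s p = (\<Sum>m \<in> Poly_Mapping.keys p. Const (Poly_Mapping.lookup p m) * subst_monomial Var m)"
    unfolding subst_eq_sum_monomials
    by (rule sum.cong) (auto simp: subst_monomial_def assms intro!: prod.cong)
  also have "\<dots> = p"
    by (simp add: subst_monomial_Var Const_def mult_single poly_mapping_sum_single)
  finally show ?thesis .
qed

subsection \<open>Elementary automorphisms\<close>

abbreviation elementary :: "nat \<Rightarrow> 'a::comm_ring_1 mpoly \<Rightarrow> nat \<Rightarrow> 'a mpoly" where
  "elementary i f \<equiv> idm(i := Var i + f)"

definition elementary_term :: "nat \<Rightarrow> nat \<Rightarrow> 'a::comm_ring_1 mpoly \<Rightarrow> bool" where
  "elementary_term n i f \<longleftrightarrow>
    (\<forall>m\<in>Poly_Mapping.keys f. Poly_Mapping.keys m \<subseteq> {..<n} - {i} \<and> m \<noteq> 0)"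

lemma keys_Var: "Poly_Mapping.keys (Var j :: 'a::comm_ring_1 mpoly) = {Poly_Mapping.single j 1}"
  by (simp add: Var_def)

lemma elementary_term_add:
  "elementary_term n i f \<Longrightarrow> elementary_term n i g \<Longrightarrow> elementary_term n i (f + g)"
  using keys_add[of f g] unfolding elementary_term_def by blast

lemma elementary_term_uminus: "elementary_term n i f \<Longrightarrow> elementary_term n i (- f)"
  unfolding elementary_term_def by simp

lemma elementary_term_single:
  "Poly_Mapping.keys e \<subseteq> {..<n} - {i} \<Longrightarrow> e \<noteq> 0 \<Longrightarrow>
    elementary_term n i (Poly_Mapping.single e c)"
  unfolding elementary_term_def by simp

lemma elementary_term_Var: "j < n \<Longrightarrow> j \<noteq> i \<Longrightarrow> elementary_term n i (Var j)"
  by (simp add: elementary_term_def keys_Var)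

lemma elementary_term_mult_Var:
  assumes f: "elementary_term n i f" and j: "j < n" "j \<noteq> i"
  shows "elementary_term n i (f * Var j)"
  unfolding elementary_term_def
proof
  fix m assume "m \<in> Poly_Mapping.keys (f * Var j)"
  then obtain x where x: "x \<in> Poly_Mapping.keys f" and m: "m = x + Poly_Mapping.single j 1"
    using keys_mult[of f "Var j"] by (auto simp: keys_Var)
  have "Poly_Mapping.keys m = Poly_Mapping.keys x \<union> {j}"
    by (simp add: m keys_add_nat)
  then show "Poly_Mapping.keys m \<subseteq> {..<n} - {i} \<and> m \<noteq> 0"
    using f x j unfolding elementary_term_def by auto
qed

lemma subst_elementary_term:
  "elementary_term n i h \<Longrightarrow> subst (Var(i := p)) h = h"
  by (rule subst_fixing_Vars) (auto simp: elementary_term_def)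

lemma comp_elementary_same:
  "elementary_term n i h \<Longrightarrow> comp (elementary i f) (elementary i h) = elementary i (f + h)"
  by (rule ext) (simp add: comp_def idm_def subst_add subst_elementary_term add_ac)

lemma elementary_commutator:
  assumes "i \<noteq> k" "j \<noteq> i" "j \<noteq> k" "elementary_term n i g" "elementary_term n k g"
  shows "comp (elementary k g) (elementary i (Var k * Var j))
    = comp (elementary i (g * Var j + Var k * Var j)) (elementary k g)"
proof
  fix m
  show "comp (elementary k g) (elementary i (Var k * Var j)) m
      = comp (elementary i (g * Var j + Var k * Var j)) (elementary k g) m"
  proof (cases "m = i")
    case True
    then show ?thesis
      using assms by (simp add: comp_def idm_def subst_add subst_mult distrib_right)
  next
    case False
    then show ?thesis
      using assms by (cases "m = k") (simp_all add: comp_def idm_def subst_add subst_elementary_term)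
  qed
qed

lemma lookup_Var_0: "Poly_Mapping.lookup (Var j :: 'a::comm_ring_1 mpoly) 0 = 0"
  by (simp add: Var_def lookup_single)

lemma Var_in_polys: "j < n \<Longrightarrow> Var j \<in> polys n"
  by (simp add: polys_def keys_Var)

lemma elementary_in_Aut0:
  fixes f :: "'a::comm_ring_1 mpoly"
  assumes i: "i < n" and f: "elementary_term n i f"
  shows "elementary i f \<in> Aut0 n"
proof -
  have endo: "elementary i h \<in> endos n" if h: "elementary_term n i h" for h :: "'a mpoly"
  proof -
    have "h \<in> polys n"
      using h unfolding elementary_term_def polys_def by blast
    then have "Var i + h \<in> polys n"
      using i keys_add[of "Var i" h] Var_in_polys[OF i] unfolding polys_def by blast
    then show ?thesis
      using i by (auto simp: endos_def idm_def Var_in_polys)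
  qed
  have inverse: "comp (elementary i h) (elementary i (- h)) = idm"
    if h: "elementary_term n i (- h)" for h :: "'a mpoly"
    using comp_elementary_same[OF h, of h] by (simp add: idm_def)
  have "elementary i f \<in> autos n"
    unfolding autos_def
  proof (intro CollectI conjI bexI)
    show "elementary i f \<in> endos n" using endo[OF f] .
    show "elementary i (- f) \<in> endos n" using endo[OF elementary_term_uminus[OF f]] .
    show "comp (elementary i f) (elementary i (- f)) = idm"
      using inverse elementary_term_uminus[OF f] by blast
    show "comp (elementary i (- f)) (elementary i f) = idm"
      using inverse[of "- f"] f by simp
  qed
  moreover have "Poly_Mapping.lookup f 0 = 0"
    using f unfolding elementary_term_def by (metis in_keys_iff)
  ultimately show ?thesis
    by (auto simp: Aut0_def idm_def lookup_add lookup_Var_0)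
qed

subsection \<open>Linear automorphisms\<close>

definition linear_form :: "nat \<Rightarrow> 'a::comm_ring_1 mpoly \<Rightarrow> bool" where
  "linear_form n p \<longleftrightarrow> (\<exists>a. p = (\<Sum>j<n. Const (a j) * Var j))"

lemma GLn_iff: "s \<in> GLn n \<longleftrightarrow> s \<in> Aut0 n \<and> (\<forall>i<n. linear_form n (s i))"
  by (simp add: GLn_def linear_form_def)

lemma linear_form_Const_Var:
  assumes "l < n"
  shows "linear_form n (Const c * Var l)"
proof -
  have "(\<Sum>j<n. Const (if j = l then c else 0) * Var j) = (\<Sum>j<n. if j = l then Const c * Var l else 0)"
    by (rule sum.cong) auto
  also have "\<dots> = Const c * Var l"
    using assms by simp
  finally show ?thesis
    unfolding linear_form_def by (intro exI[of _ "\<lambda>j. if j = l then c else 0"]) (rule sym)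
qed

lemma linear_form_Var: "l < n \<Longrightarrow> linear_form n (Var l)"
  using linear_form_Const_Var[of l n 1] by (simp add: Const_def)

lemma linear_form_add:
  assumes "linear_form n p" "linear_form n q"
  shows "linear_form n (p + q)"
proof -
  obtain a b where "p = (\<Sum>j<n. Const (a j) * Var j)" "q = (\<Sum>j<n. Const (b j) * Var j)"
    using assms unfolding linear_form_def by blast
  then show ?thesis
    unfolding linear_form_def
    by (intro exI[of _ "\<lambda>j. a j + b j"]) (simp add: Const_add distrib_right sum.distrib)
qed

lemma Const_mult_Var: "Const c * Var l = Poly_Mapping.single (Poly_Mapping.single l 1) c"
  by (simp add: Const_def Var_def mult_single)

lemma elementary_linear_in_GLn:
  assumes "i < n" "l < n" "i \<noteq> l"
  shows "elementary i (Const c * Var l) \<in> GLn n"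
  unfolding GLn_iff
proof
  show "elementary i (Const c * Var l) \<in> Aut0 n"
    unfolding Const_mult_Var using assms by (intro elementary_in_Aut0 elementary_term_single) auto
  show "\<forall>j<n. linear_form n (elementary i (Const c * Var l) j)"
    using assms by (auto simp: idm_def linear_form_Var linear_form_add linear_form_Const_Var)
qed

abbreviation transposition :: "nat \<Rightarrow> nat \<Rightarrow> nat \<Rightarrow> 'a::comm_ring_1 mpoly" where
  "transposition i k \<equiv> idm(i := Var k, k := Var i)"

lemma comp_transposition_self: "comp (transposition i k) (transposition i k) = idm"
  by (rule ext) (simp add: comp_def idm_def)

lemma transposition_in_GLn:
  assumes "i < n" "k < n"
  shows "transposition i k \<in> GLn n"
proof -
  have Var: "transposition i k j = Var (if j = i then k else if j = k then i else j)" for j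
    by (simp add: idm_def)
  have "transposition i k \<in> endos n"
    using assms by (auto simp: endos_def Var Var_in_polys idm_def)
  then have "transposition i k \<in> autos n"
    unfolding autos_def using comp_transposition_self by blast
  then show ?thesis
    using assms by (auto simp: GLn_iff Aut0_def Var lookup_Var_0 linear_form_Var idm_def)
qed

lemma transposition_conj_elementary:
  assumes "i \<noteq> k" "j \<noteq> i" "j \<noteq> k"
  shows "comp (transposition i k) (elementary i (Var k * Var j))
    = comp (elementary k (Var i * Var j)) (transposition i k)"
  using assms by (intro ext) (simp add: comp_def idm_def subst_add subst_mult)

subsection \<open>Fixed points of a group automorphism of Aut0\<close>

lemma fixed_if_comp_fixed:
  assumes \<Phi>: "group_automorphism_Aut0 n \<Phi>"
    and s: "s \<in> Aut0 n" and t: "t \<in> Aut0 n" and "\<Phi> t = t" and "\<Phi> (comp s t) = comp s t"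
  shows "\<Phi> s = s"
proof -
  have "comp (\<Phi> s) t = comp s t"
    using \<Phi> s t assms(4,5) by (simp add: group_automorphism_Aut0_def)
  moreover obtain t' where "comp t t' = idm"
    using t by (auto simp: Aut0_def autos_def)
  ultimately show ?thesis
    by (rule comp_right_cancel)
qed

text \<open>The hypotheses say that c is the commutator b a b^-1 a^-1, with d = b a b^-1.\<close>
lemma fixed_commutator:
  assumes \<Phi>: "group_automorphism_Aut0 n \<Phi>"
    and in_Aut0: "a \<in> Aut0 n" "b \<in> Aut0 n" "c \<in> Aut0 n" "d \<in> Aut0 n"
    and fixed: "\<Phi> a = a" "\<Phi> b = b"
    and conj: "comp b a = comp d b" and c: "comp c a = d"
  shows "\<Phi> c = c"
proof -
  have "\<Phi> (comp d b) = comp d b"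
    using \<Phi> in_Aut0 fixed by (simp add: group_automorphism_Aut0_def flip: conj)
  then have "\<Phi> d = d"
    using fixed_if_comp_fixed[OF \<Phi> in_Aut0(4,2) fixed(2)] by blast
  then show ?thesis
    using fixed_if_comp_fixed[OF \<Phi> in_Aut0(3,1) fixed(1)] by (simp add: c)
qed

lemma fixed_elementary_mult_Var:
  assumes \<Phi>: "group_automorphism_Aut0 n \<Phi>"
    and idx: "i < n" "k < n" "j < n" "i \<noteq> k" "j \<noteq> i" "j \<noteq> k"
    and g: "elementary_term n i g" "elementary_term n k g"
    and fixed: "\<Phi> (elementary i (Var k * Var j)) = elementary i (Var k * Var j)"
      "\<Phi> (elementary k g) = elementary k g"
  shows "\<Phi> (elementary i (g * Var j)) = elementary i (g * Var j)"
proof -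
  have kj: "elementary_term n i (Var k * Var j)"
    using idx by (intro elementary_term_mult_Var elementary_term_Var) auto
  have gj: "elementary_term n i (g * Var j)"
    using idx g by (intro elementary_term_mult_Var) auto
  show ?thesis
  proof (rule fixed_commutator[OF \<Phi> _ _ _ _ fixed])
    show "elementary i (Var k * Var j) \<in> Aut0 n"
      by (rule elementary_in_Aut0[OF idx(1) kj])
    show "elementary k g \<in> Aut0 n"
      using idx g by (intro elementary_in_Aut0)
    show "elementary i (g * Var j) \<in> Aut0 n"
      using idx gj by (intro elementary_in_Aut0)
    show "elementary i (g * Var j + Var k * Var j) \<in> Aut0 n"
      using idx gj kj by (intro elementary_in_Aut0 elementary_term_add)
    show "comp (elementary k g) (elementary i (Var k * Var j))
        = comp (elementary i (g * Var j + Var k * Var j)) (elementary k g)"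
      using idx g by (intro elementary_commutator)
    show "comp (elementary i (g * Var j)) (elementary i (Var k * Var j))
        = elementary i (g * Var j + Var k * Var j)"
      using kj by (rule comp_elementary_same)
  qed
qed

locale Aut0_automorphism_fixing_GLn_psi =
  fixes n :: nat and \<Phi> :: "(nat \<Rightarrow> 'a::comm_ring_1 mpoly) \<Rightarrow> (nat \<Rightarrow> 'a mpoly)"
  assumes group_automorphism: "group_automorphism_Aut0 n \<Phi>"
    and four_le_n: "4 \<le> n"
    and fixes_GLn: "g \<in> GLn n \<Longrightarrow> \<Phi> g = g"
    and fixes_psi: "\<Phi> (elementary 0 (Var 1 * Var 2)) = elementary 0 (Var 1 * Var 2)"
begin

lemma fixes_psi_transposed: "\<Phi> (elementary 1 (Var 0 * Var 2)) = elementary 1 (Var 0 * Var 2)"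
proof (rule fixed_if_comp_fixed[OF group_automorphism])
  have "transposition 0 1 \<in> GLn n"
    using four_le_n by (intro transposition_in_GLn) auto
  then show P: "transposition 0 1 \<in> Aut0 n" and P_fixed: "\<Phi> (transposition 0 1) = transposition 0 1"
    by (auto simp: GLn_iff intro: fixes_GLn)
  show "elementary 1 (Var 0 * Var 2) \<in> Aut0 n"
    using four_le_n by (intro elementary_in_Aut0 elementary_term_mult_Var elementary_term_Var) auto
  have psi: "elementary 0 (Var 1 * Var 2) \<in> Aut0 n"
    using four_le_n by (intro elementary_in_Aut0 elementary_term_mult_Var elementary_term_Var) auto
  have "\<Phi> (comp (transposition 0 1) (elementary 0 (Var 1 * Var 2)))
      = comp (transposition 0 1) (elementary 0 (Var 1 * Var 2))"
    using group_automorphism P psi P_fixed fixes_psi unfolding group_automorphism_Aut0_def by metis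
  then show "\<Phi> (comp (elementary 1 (Var 0 * Var 2)) (transposition 0 1))
      = comp (elementary 1 (Var 0 * Var 2)) (transposition 0 1)"
    by (simp add: transposition_conj_elementary)
qed

lemma fixes_quadratic:
  assumes i: "i < 2" and j: "2 \<le> j" "j < n"
  shows "\<Phi> (elementary i (Var (1 - i) * Var j)) = elementary i (Var (1 - i) * Var j)"
proof -
  have base: "\<Phi> (elementary i (Var (1 - i) * Var 2)) = elementary i (Var (1 - i) * Var 2)"
    using i fixes_psi fixes_psi_transposed by (cases i) auto
  show ?thesis
  proof (cases "j = 2")
    case True
    with base show ?thesis by simp
  next
    case False
    have idx: "i < n" "2 < n" "1 - i < n" "i \<noteq> 2" "1 - i \<noteq> i" "1 - i \<noteq> 2"
      using i four_le_n by (auto simp: less_2_cases_iff)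
    have "elementary 2 (Var j) \<in> GLn n"
      using j False elementary_linear_in_GLn[of 2 n j 1] by (simp add: Const_def)
    then have "\<Phi> (elementary 2 (Var j)) = elementary 2 (Var j)"
      by (rule fixes_GLn)
    moreover have "elementary_term n i (Var j)" "elementary_term n 2 (Var j)"
      using i j False by (auto intro: elementary_term_Var)
    moreover have "\<Phi> (elementary i (Var 2 * Var (1 - i))) = elementary i (Var 2 * Var (1 - i))"
      using base by (simp add: mult.commute)
    ultimately have "\<Phi> (elementary i (Var j * Var (1 - i))) = elementary i (Var j * Var (1 - i))"
      using fixed_elementary_mult_Var[OF group_automorphism idx] by blast
    then show ?thesis
      by (simp add: mult.commute)
  qed
qed

lemma fixes_monomial:
  assumes "Poly_Mapping.keys e \<subseteq> {2..<n}" "e \<noteq> 0" "i < 2"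
  shows "\<Phi> (elementary i (Poly_Mapping.single e c)) = elementary i (Poly_Mapping.single e c)"
  using assms
proof (induction e arbitrary: i rule: poly_mapping_add_single_induct)
  case zero
  then show ?case by simp
next
  case (add_single e j)
  have j: "2 \<le> j" "j < n" and e: "Poly_Mapping.keys e \<subseteq> {2..<n}"
    using add_single.prems(1) by (auto simp: keys_add_nat)
  have i: "i < 2"
    using add_single.prems(3) .
  show ?case
  proof (cases "e = 0")
    case True
    then have "Poly_Mapping.single (e + Poly_Mapping.single j 1) c = Const c * Var j"
      by (simp add: Const_mult_Var)
    moreover have "elementary i (Const c * Var j) \<in> GLn n"
      using i j by (intro elementary_linear_in_GLn) auto
    ultimately show ?thesis
      by (metis fixes_GLn)
  next
    case False
    have idx: "i < n" "1 - i < n" "j < n" "i \<noteq> 1 - i" "j \<noteq> i" "j \<noteq> 1 - i"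
      using i j four_le_n by (auto simp: less_2_cases_iff)
    have "Poly_Mapping.keys e \<subseteq> {..<n} - {i}" "Poly_Mapping.keys e \<subseteq> {..<n} - {1 - i}"
      using e i by (fastforce simp: less_2_cases_iff)+
    then have "elementary_term n i (Poly_Mapping.single e c)"
      "elementary_term n (1 - i) (Poly_Mapping.single e c)"
      using False by (auto intro: elementary_term_single)
    moreover have "\<Phi> (elementary i (Var (1 - i) * Var j)) = elementary i (Var (1 - i) * Var j)"
      using i j by (rule fixes_quadratic)
    moreover have "\<Phi> (elementary (1 - i) (Poly_Mapping.single e c))
        = elementary (1 - i) (Poly_Mapping.single e c)"
      by (rule add_single.IH[OF e False]) simp
    ultimately have "\<Phi> (elementary i (Poly_Mapping.single e c * Var j))
        = elementary i (Poly_Mapping.single e c * Var j)"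
      using fixed_elementary_mult_Var[OF group_automorphism idx] by blast
    moreover have "Poly_Mapping.single e c * Var j = Poly_Mapping.single (e + Poly_Mapping.single j 1) c"
      by (simp add: Var_def mult_single)
    ultimately show ?thesis
      by (simp add: fun_upd_def)
  qed
qed

end

theorem mainTheorem5:
  fixes \<Phi> :: "(nat \<Rightarrow> 'a::field mpoly) \<Rightarrow> (nat \<Rightarrow> 'a mpoly)"
    and n :: nat and c :: 'a and e :: "nat \<Rightarrow>\<^sub>0 nat"
  assumes "alg_closed TYPE('a)"
    and "CHAR('a) > 0" and "CHAR('a) \<noteq> 2"
    and "n \<ge> 4"
    and "group_automorphism_Aut0 n \<Phi>"
    and "\<forall>g \<in> GLn n. \<Phi> g = g"
    and "\<Phi> (idm(0 := Var 0 + Var 1 * Var 2)) = idm(0 := Var 0 + Var 1 * Var 2)"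
    and "c \<noteq> 0" and "Poly_Mapping.keys e \<subseteq> {2..<n}" and "e \<noteq> 0"
  shows "\<Phi> (idm(0 := Var 0 + Poly_Mapping.single e c)) = idm(0 := Var 0 + Poly_Mapping.single e c)"
proof -
  interpret Aut0_automorphism_fixing_GLn_psi n \<Phi>
    using assms(4-7) by unfold_locales auto
  show ?thesis
    using fixes_monomial[of e 0 c] assms(9,10) by simp
qed

end
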